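(* Let $\mathcal{A}\subseteq\mathcal{B}$ be sub-$\sigma$-algebras of a complete probability space $(\Omega,\mathcal{F},P)$. If $M:L^+_\infty(\mathcal{B})\to L^+_\infty(\mathcal{A})$ is a weak $\mathcal{A}$-homogeneous, regular, monotone, sublinear operator, then $M$ is $\mathcal{A}$-homogeneous.
   Context: Weak $\mathcal{A}$-homogeneous: $M(1_AX)=1_AM(X)$ for all $A\in\mathcal{A}$, $X\in L^+_\infty(\mathcal{B})$. $\mathcal{A}$-homogeneous: $M(fX)=fM(X)$ for all $f\in L^+_\infty(\mathcal{A})$. Regular: $X_n\downarrow0$ a.s. implies $M(X_n)\to0$ a.s. Sublinear: $M(X+Y)\le M(X)+M(Y)$, $M(\lambda X)=\lambda M(X)$ for real $\lambda\ge0$. Monotone: $X\ge Y\Rightarrow M(X)\ge M(Y)$. *)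

theory Defs
  imports "HOL-Probability.Probability"
begin

text \<open>Representatives of elements of L^+_infinity(N), where N is a sub-sigma-algebra
  (given as a measure with the same space) of the probability space F: N-measurable
  real functions that are F-a.e. nonnegative and F-essentially bounded.
  Elements of L^+_infinity are classes of such functions modulo F-a.e. equality.\<close>
definition Linf_pos :: "'a measure \<Rightarrow> 'a measure \<Rightarrow> ('a \<Rightarrow> real) \<Rightarrow> bool" where
  "Linf_pos F N X \<longleftrightarrow> X \<in> borel_measurable N \<and> (AE x in F. 0 \<le> X x)
     \<and> (\<exists>c. AE x in F. X x \<le> c)"

end

theory Submission
  imports Defs
begin

text \<open>On the \<A>-measurable set where \<open>k/N \<le> f < (k+1)/N\<close>, weak homogeneity
  localises monotonicity, so positive homogeneity squeezes \<open>M (f X)\<close> between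
  \<open>(k/N) M X\<close> and \<open>((k+1)/N) M X\<close>. These countably many sets cover the space for every
  \<open>N\<close>, hence a.e. \<open>\<bar>M (f X) - f M X\<bar> \<le> M X / N\<close> for all \<open>N\<close> simultaneously.
  Because the comparison is pointwise a.e. on each set, no summation over the partition is
  needed.\<close>

lemma Linf_pos_mult:
  assumes X: "Linf_pos F N X" and g: "g \<in> borel_measurable N"
    and g_nonneg: "AE x in F. 0 \<le> g x" and g_bounded: "AE x in F. g x \<le> c"
  shows "Linf_pos F N (\<lambda>y. g y * X y)"
proof -
  from X obtain d where d: "AE x in F. X x \<le> d" and X_nonneg: "AE x in F. 0 \<le> X x"
    and X_meas: "X \<in> borel_measurable N"
    unfolding Linf_pos_def by blast
  have "AE x in F. g x * X x \<le> max c 0 * max d 0"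
    using d X_nonneg g_nonneg g_bounded by eventually_elim (intro mult_mono, auto)
  moreover have "AE x in F. 0 \<le> g x * X x"
    using X_nonneg g_nonneg by eventually_elim auto
  moreover have "(\<lambda>y. g y * X y) \<in> borel_measurable N"
    using X_meas g by measurable
  ultimately show ?thesis
    unfolding Linf_pos_def by blast
qed

lemma Linf_pos_const_mult:
  "Linf_pos F N X \<Longrightarrow> 0 \<le> c \<Longrightarrow> Linf_pos F N (\<lambda>y. c * X y)"
  by (rule Linf_pos_mult[of _ _ _ _ c]) auto

lemma Linf_pos_indicator_mult:
  "Linf_pos F N X \<Longrightarrow> A \<in> sets N \<Longrightarrow> Linf_pos F N (\<lambda>y. indicator A y * X y)"
  by (rule Linf_pos_mult[of _ _ _ _ 1]) (auto simp: indicator_def)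

lemma eq_mult_if_grid_bounds:
  fixes t m v :: real
  assumes t_nonneg: "0 \<le> t" and m_nonneg: "0 \<le> m"
    and grid: "\<And>n k. real k / real (Suc n) \<le> t \<Longrightarrow> t < (real k + 1) / real (Suc n) \<Longrightarrow>
      real k / real (Suc n) * m \<le> v \<and> v \<le> (real k + 1) / real (Suc n) * m"
  shows "v = t * m"
proof -
  have bound: "\<bar>v - t * m\<bar> \<le> m * inverse (real (Suc n))" for n
  proof -
    define k where "k = nat \<lfloor>real (Suc n) * t\<rfloor>"
    have "real k = of_int \<lfloor>real (Suc n) * t\<rfloor>"
      unfolding k_def using t_nonneg by simp
    then have "real k \<le> real (Suc n) * t" "real (Suc n) * t < real k + 1"
      by linarith+
    then have lower: "real k / real (Suc n) \<le> t" and upper: "t < (real k + 1) / real (Suc n)"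
      by (simp_all add: field_simps)
    have "(real k + 1) / real (Suc n) = real k / real (Suc n) + inverse (real (Suc n))"
      by (simp add: field_simps)
    with grid[OF lower upper] mult_right_mono[OF lower m_nonneg]
      mult_right_mono[OF less_imp_le[OF upper] m_nonneg]
    show ?thesis
      by (simp only:) (simp add: algebra_simps abs_le_iff)
  qed
  have "(\<lambda>n. m * inverse (real (Suc n))) \<longlonglongrightarrow> 0"
    using tendsto_mult[OF tendsto_const LIMSEQ_inverse_real_of_nat, of m] by simp
  then have "\<bar>v - t * m\<bar> \<le> 0"
    by (rule LIMSEQ_le_const) (use bound in auto)
  then show ?thesis
    by simp
qed

locale weakly_homogeneous_operator =
  fixes F \<A> \<B> :: "'a measure"
    and M :: "('a \<Rightarrow> real) \<Rightarrow> ('a \<Rightarrow> real)"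
  assumes subB: "subalgebra F \<B>"
    and subA: "subalgebra \<B> \<A>"
    and maps: "\<And>X. Linf_pos F \<B> X \<Longrightarrow> Linf_pos F \<A> (M X)"
    and weak_hom: "\<And>A X. A \<in> sets \<A> \<Longrightarrow> Linf_pos F \<B> X \<Longrightarrow>
        (AE x in F. M (\<lambda>y. indicator A y * X y) x = indicator A x * M X x)"
    and mono: "\<And>X Y. Linf_pos F \<B> X \<Longrightarrow> Linf_pos F \<B> Y \<Longrightarrow>
        (AE x in F. Y x \<le> X x) \<Longrightarrow> (AE x in F. M Y x \<le> M X x)"
    and pos_hom: "\<And>X (c::real). Linf_pos F \<B> X \<Longrightarrow> 0 \<le> c \<Longrightarrow>
        (AE x in F. M (\<lambda>y. c * X y) x = c * M X x)"
begin

lemma sets_\<A>_subset_\<B>: "sets \<A> \<subseteq> sets \<B>"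
  using subA unfolding subalgebra_def by auto

lemma space_\<A>: "space \<A> = space F"
  using subA subB unfolding subalgebra_def by auto

lemma M_nonneg: "Linf_pos F \<B> X \<Longrightarrow> AE x in F. 0 \<le> M X x"
  using maps unfolding Linf_pos_def by blast

lemma mono_on:
  assumes A: "A \<in> sets \<A>" and Y: "Linf_pos F \<B> Y" and Z: "Linf_pos F \<B> Z"
    and le: "AE x in F. x \<in> A \<longrightarrow> Y x \<le> Z x"
  shows "AE x in F. x \<in> A \<longrightarrow> M Y x \<le> M Z x"
proof -
  have A_\<B>: "A \<in> sets \<B>"
    using A sets_\<A>_subset_\<B> by blast
  have "AE x in F. M (\<lambda>y. indicator A y * Y y) x \<le> M (\<lambda>y. indicator A y * Z y) x"
    using le by (intro mono Linf_pos_indicator_mult Y Z A_\<B>)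
      (auto elim!: eventually_mono simp: indicator_def)
  with weak_hom[OF A Y] weak_hom[OF A Z] show ?thesis
    by eventually_elim (auto simp: indicator_def)
qed

lemma mult_bounds_on:
  assumes f: "Linf_pos F \<A> f" and X: "Linf_pos F \<B> X" and A: "A \<in> sets \<A>"
    and a: "0 \<le> a" and ab: "a \<le> b" and f_between: "\<And>x. x \<in> A \<Longrightarrow> a \<le> f x \<and> f x \<le> b"
  shows "AE x in F. x \<in> A \<longrightarrow> a * M X x \<le> M (\<lambda>y. f y * X y) x \<and>
    M (\<lambda>y. f y * X y) x \<le> b * M X x"
proof -
  have "f \<in> borel_measurable \<B>"
    using f measurable_from_subalg[OF subA] unfolding Linf_pos_def by blast
  moreover obtain c where "AE x in F. f x \<le> c"
    using f unfolding Linf_pos_def by blast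
  ultimately have fX: "Linf_pos F \<B> (\<lambda>y. f y * X y)"
    using f X unfolding Linf_pos_def[of F \<A>] by (blast intro: Linf_pos_mult)
  have X_nonneg: "AE x in F. 0 \<le> X x"
    using X unfolding Linf_pos_def by blast
  have "AE x in F. x \<in> A \<longrightarrow> M (\<lambda>y. a * X y) x \<le> M (\<lambda>y. f y * X y) x"
    using X_nonneg f_between
    by (intro mono_on A fX Linf_pos_const_mult X a) (auto elim!: eventually_mono intro: mult_right_mono)
  moreover have "AE x in F. x \<in> A \<longrightarrow> M (\<lambda>y. f y * X y) x \<le> M (\<lambda>y. b * X y) x"
    using X_nonneg f_between a ab
    by (intro mono_on A fX Linf_pos_const_mult X) (auto elim!: eventually_mono intro: mult_right_mono)
  moreover have "AE x in F. M (\<lambda>y. b * X y) x = b * M X x"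
    using a ab by (intro pos_hom X) simp
  ultimately show ?thesis
    using pos_hom[OF X a] by eventually_elim auto
qed

theorem homogeneous:
  assumes f: "Linf_pos F \<A> f" and X: "Linf_pos F \<B> X"
  shows "AE x in F. M (\<lambda>y. f y * X y) x = f x * M X x"
proof -
  define cell where
    "cell n k = {x \<in> space \<A>. real k / real (Suc n) \<le> f x \<and> f x < (real k + 1) / real (Suc n)}"
    for n k :: nat
  have "f \<in> borel_measurable \<A>"
    using f unfolding Linf_pos_def by blast
  then have "cell n k \<in> sets \<A>" for n k
    unfolding cell_def by measurable
  then have "AE x in F. x \<in> cell n k \<longrightarrow>
      real k / real (Suc n) * M X x \<le> M (\<lambda>y. f y * X y) x \<and>
      M (\<lambda>y. f y * X y) x \<le> (real k + 1) / real (Suc n) * M X x" for n k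
    by (rule mult_bounds_on[OF f X]) (auto simp: cell_def divide_right_mono)
  then have "AE x in F. \<forall>n k. x \<in> cell n k \<longrightarrow>
      real k / real (Suc n) * M X x \<le> M (\<lambda>y. f y * X y) x \<and>
      M (\<lambda>y. f y * X y) x \<le> (real k + 1) / real (Suc n) * M X x"
    by (simp add: AE_all_countable)
  moreover have "AE x in F. 0 \<le> f x"
    using f unfolding Linf_pos_def by blast
  ultimately show ?thesis
    using M_nonneg[OF X] AE_space
    by eventually_elim (rule eq_mult_if_grid_bounds, auto simp: cell_def space_\<A>)
qed

end

theorem lemma3p6:
  fixes F \<A> \<B> :: "'a measure"
    and M :: "('a \<Rightarrow> real) \<Rightarrow> ('a \<Rightarrow> real)"
  assumes prob: "prob_space F"
    and complete: "complete_measure F"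
    and subB: "subalgebra F \<B>"
    and subA: "subalgebra \<B> \<A>"
    \<comment> \<open>M is a well-defined map L^+_inf(B) -> L^+_inf(A) on a.e.-classes\<close>
    and maps: "\<And>X. Linf_pos F \<B> X \<Longrightarrow> Linf_pos F \<A> (M X)"
    and welldef: "\<And>X Y. Linf_pos F \<B> X \<Longrightarrow> Linf_pos F \<B> Y \<Longrightarrow>
        (AE x in F. X x = Y x) \<Longrightarrow> (AE x in F. M X x = M Y x)"
    \<comment> \<open>weak A-homogeneity\<close>
    and weak_hom: "\<And>A X. A \<in> sets \<A> \<Longrightarrow> Linf_pos F \<B> X \<Longrightarrow>
        (AE x in F. M (\<lambda>y. indicator A y * X y) x = indicator A x * M X x)"
    \<comment> \<open>regularity\<close>
    and regular: "\<And>Xs. (\<And>n. Linf_pos F \<B> (Xs n)) \<Longrightarrow>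
        (AE x in F. (\<forall>n. Xs (Suc n) x \<le> Xs n x) \<and> (\<lambda>n. Xs n x) \<longlonglongrightarrow> 0) \<Longrightarrow>
        (AE x in F. (\<lambda>n. M (Xs n) x) \<longlonglongrightarrow> 0)"
    \<comment> \<open>monotonicity\<close>
    and mono: "\<And>X Y. Linf_pos F \<B> X \<Longrightarrow> Linf_pos F \<B> Y \<Longrightarrow>
        (AE x in F. Y x \<le> X x) \<Longrightarrow> (AE x in F. M Y x \<le> M X x)"
    \<comment> \<open>sublinearity\<close>
    and subadd: "\<And>X Y. Linf_pos F \<B> X \<Longrightarrow> Linf_pos F \<B> Y \<Longrightarrow>
        (AE x in F. M (\<lambda>y. X y + Y y) x \<le> M X x + M Y x)"
    and pos_hom: "\<And>X (c::real). Linf_pos F \<B> X \<Longrightarrow> 0 \<le> c \<Longrightarrow>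
        (AE x in F. M (\<lambda>y. c * X y) x = c * M X x)"
  shows "\<And>f X. Linf_pos F \<A> f \<Longrightarrow> Linf_pos F \<B> X \<Longrightarrow>
        (AE x in F. M (\<lambda>y. f y * X y) x = f x * M X x)"
proof -
  interpret weakly_homogeneous_operator F \<A> \<B> M
    using subB subA maps weak_hom mono pos_hom by unfold_locales
  show "\<And>f X. Linf_pos F \<A> f \<Longrightarrow> Linf_pos F \<B> X \<Longrightarrow>
      (AE x in F. M (\<lambda>y. f y * X y) x = f x * M X x)"
    by (rule homogeneous)
qed

end
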